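(* Let $\tau\in\mathbb{Z}$ and let $m=2^\alpha a$, $l=2^\beta b$ with $a,b$ positive odd integers, $\alpha\geq1$, $\beta\geq0$. Then \[ 2^{2\alpha}\ \Big|\ (-1)^{m\tau+m+l}\binom{m}{l}\binom{m\tau+l-1}{m-1}-(-1)^{\frac{m\tau+m+l}{2}}\binom{m/2}{l/2}\binom{\frac{m\tau+l}{2}-1}{\frac{m}{2}-1}, \] where for $\beta=0$ the second term is set to zero.
   Context: Binomial coefficients with negative top argument are defined by $\binom{n}{k}=(-1)^k\binom{-n+k-1}{k}$ for $n<0$, $k\geq0$; for $n\geq0$ they are the usual ones (zero when $k>n$). *)

theory Defs
  imports Main
begin

definition ibinom :: "int \<Rightarrow> nat \<Rightarrow> int" where
  "ibinom n k = (if n \<ge> 0 then int (nat n choose k)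
                 else (-1) ^ k * int (nat (- n + int k - 1) choose k))"

definition neg1pow :: "int \<Rightarrow> int" where
  "neg1pow e = (if even e then 1 else -1)"

end

theory Submission
  imports Defs "HOL-Computational_Algebra.Polynomial" "HOL-Number_Theory.Cong"
begin

(* For odd l the second term vanishes, and both binomial coefficients of the first term are
   divisible by 2^alpha, by the absorption identities l C(m,l) = m C(m-1,l-1) and
   m C(n,m) = n C(n-1,m-1) with n = m tau + l odd.

   For m = 2u, l = 2v put N = u tau + v and w = u - v. Separating the even and odd factors of
   the factorials gives
     C(2u,2v) (2v-1)!! (2w-1)!! = C(u,v) (2u-1)!!   and   C(2N-1,2u-1) (2u-1)!! = C(N-1,u-1) P_u(N)
   with P_u(N) = (2N-1)(2N-3)...(2N-2u+1). As 2^(alpha-1) divides u, P_u(N+u) = (-1)^u P_u(N)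
   modulo 2^(2 alpha): P_u(N) splits into blocks Q(x) = (x+1)(x+3)...(x+2^alpha-1) with x even,
   Q' is divisible by 2^alpha at even arguments (it vanishes at the midpoint and is 2-periodic
   there modulo 2^alpha), and the shift moves each block argument by a multiple of 2^alpha, so
   Taylor's formula applies. Hence P_u(N) = +-P_u(v) = +-(2v-1)!! (2w-1)!!, an odd number that
   can be cancelled. *)

lemma neg1pow_add: "neg1pow (a + b) = neg1pow a * neg1pow b"
  by (simp add: neg1pow_def)

lemma neg1pow_mult_self: "neg1pow a * neg1pow a = 1"
  by (simp add: neg1pow_def)

lemma neg1pow_of_nat: "neg1pow (int n) = (-1) ^ n"
  by (simp add: neg1pow_def)

lemma ibinom_of_nat [simp]: "ibinom (int n) k = int (n choose k)"
  by (simp add: ibinom_def)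

lemma of_int_ibinom: "of_int (ibinom n k) = (of_int n :: 'a :: field_char_0) gchoose k"
proof (cases "n \<ge> 0")
  case True
  then show ?thesis
    using binomial_gbinomial[of "nat n" k, where 'a = 'a] by (simp add: ibinom_def)
next
  case False
  then have "of_nat (nat (- n + int k - 1)) = (of_nat k - of_int n - 1 :: 'a)"
    by simp
  with False show ?thesis
    by (simp add: ibinom_def binomial_gbinomial gbinomial_negated_upper[of "of_int n :: 'a"])
qed

lemma ibinom_absorption: "int (Suc k) * ibinom n (Suc k) = n * ibinom (n - 1) k"
proof -
  have "real_of_int (int (Suc k) * ibinom n (Suc k)) = real_of_int (n * ibinom (n - 1) k)"
    using gbinomial_absorption[of k "real_of_int n"] by (simp add: of_int_ibinom)
  then show ?thesis by (simp only: of_int_eq_iff)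
qed

lemma pow2_dvd_odd_mult_cancel:
  fixes y z :: int
  assumes "odd y" "2 ^ n dvd y * z"
  shows "2 ^ n dvd z"
  using assms by (simp add: coprime_dvd_mult_right_iff)

lemma poly_taylor_order2:
  fixes p :: "'a :: idom poly"
  obtains r where "poly p (x + h) = poly p x + h * poly (pderiv p) x + h\<^sup>2 * r"
proof (induction p arbitrary: thesis)
  case 0
  show ?case by (rule "0.prems"[of 0]) simp
next
  case (pCons a q)
  obtain r where r: "poly q (x + h) = poly q x + h * poly (pderiv q) x + h\<^sup>2 * r"
    using pCons.IH by blast
  have "poly (pCons a q) (x + h) = a + (x + h) * (poly q x + h * poly (pderiv q) x + h\<^sup>2 * r)"
    by (simp only: poly_pCons r)
  also have "\<dots> = poly (pCons a q) x + h * poly (pderiv (pCons a q)) x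
      + h\<^sup>2 * (poly (pderiv q) x + (x + h) * r)"
    by (simp add: pderiv_pCons algebra_simps power2_eq_square)
  finally show ?case by (rule pCons.prems)
qed

definition odd_block :: "nat \<Rightarrow> int poly" where
  "odd_block K = (\<Prod>i<K. [:2 * int i + 1, 1:])"

lemma poly_odd_block: "poly (odd_block K) x = (\<Prod>i<K. x + 2 * int i + 1)"
  by (simp add: odd_block_def poly_prod algebra_simps)

lemma odd_block_shift:
  "pcompose (odd_block K) [:2, 1:] * [:1, 1:] = odd_block K * [:1 + 2 * int K, 1:]"
proof -
  have "poly (odd_block K) (x + 2) * (x + 1) = poly (odd_block K) x * (x + 1 + 2 * int K)" for x
  proof -
    have "(x + 1) * (\<Prod>i<K. (x + 2) + 2 * int i + 1) = (\<Prod>i<Suc K. x + 2 * int i + 1)"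
      by (subst prod.lessThan_Suc_shift) (simp add: algebra_simps)
    also have "\<dots> = (\<Prod>i<K. x + 2 * int i + 1) * (x + 1 + 2 * int K)"
      by (simp add: algebra_simps)
    finally show ?thesis by (simp add: poly_odd_block mult.commute)
  qed
  then show ?thesis
    by (intro poly_eq_poly_eq_iff[THEN iffD1] ext) (simp add: poly_pcompose algebra_simps)
qed

lemma odd_block_reflect:
  assumes "even K"
  shows "pcompose (odd_block K) [:- int K, - 1:] = pcompose (odd_block K) [:- int K, 1:]"
proof -
  have "(\<Prod>i<K. - int K - y + 2 * int i + 1) = (\<Prod>i<K. - int K + y + 2 * int i + 1)" for y
  proof -
    have "(\<Prod>i<K. - int K - y + 2 * int i + 1) = (\<Prod>i<K. - int K - y + 2 * int (K - Suc i) + 1)"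
      by (rule prod.nat_diff_reindex[symmetric])
    also have "\<dots> = (\<Prod>i<K. - 1 * (- int K + y + 2 * int i + 1))"
      by (rule prod.cong) (auto simp: of_nat_diff algebra_simps)
    also have "\<dots> = (- 1) ^ K * (\<Prod>i<K. - int K + y + 2 * int i + 1)"
      by (simp only: prod.distrib prod_constant card_lessThan)
    finally show ?thesis using assms by simp
  qed
  then show ?thesis
    by (intro poly_eq_poly_eq_iff[THEN iffD1] ext) (simp add: poly_pcompose poly_odd_block algebra_simps)
qed

lemma poly_pderiv_odd_block_midpoint:
  assumes "even K"
  shows "poly (pderiv (odd_block K)) (- int K) = 0"
proof -
  have "poly (pderiv (pcompose (odd_block K) [:- int K, - 1:])) 0
      = poly (pderiv (pcompose (odd_block K) [:- int K, 1:])) 0"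
    by (simp only: odd_block_reflect[OF assms])
  then have "- poly (pderiv (odd_block K)) (- int K) = poly (pderiv (odd_block K)) (- int K)"
    by (simp add: pderiv_pcompose pderiv_pCons poly_pcompose)
  then show ?thesis by simp
qed

lemma poly_pderiv_odd_block_shift_cong:
  assumes "even x"
  shows "[poly (pderiv (odd_block (2 ^ e))) (x + 2) = poly (pderiv (odd_block (2 ^ e))) x] (mod 2 ^ Suc e)"
proof -
  define Q where "Q = odd_block (2 ^ e)"
  define D where "D = pderiv Q"
  (* Differentiate Q(x+2) (x+1) = Q(x) (x+1+2^(e+1)) and cancel the odd factor x+1 twice. *)
  have odd: "odd (x + 1)" using assms by simp
  have shift: "poly Q (x + 2) * (x + 1) = poly Q x * (x + 1 + 2 ^ Suc e)"
    using arg_cong[OF odd_block_shift, of "\<lambda>p. poly p x"] by (simp add: Q_def poly_pcompose algebra_simps)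
  have "pderiv (pcompose Q [:2, 1:] * [:1, 1:]) = pderiv (Q * [:1 + 2 ^ Suc e, 1:])"
    unfolding Q_def odd_block_shift by simp
  moreover have "pderiv [:c, 1:] = 1" for c :: int
    by (simp add: pderiv_pCons)
  ultimately have "pcompose Q [:2, 1:] * 1 + [:1, 1:] * (pcompose D [:2, 1:] * 1)
      = Q * 1 + [:1 + 2 ^ Suc e, 1:] * D"
    unfolding D_def by (simp only: pderiv_mult pderiv_pcompose)
  from arg_cong[OF this, of "\<lambda>p. poly p x"]
  have shift': "poly Q (x + 2) + (x + 1) * poly D (x + 2) = poly Q x + (x + 1 + 2 ^ Suc e) * poly D x"
    by (simp add: poly_pcompose algebra_simps)
  have "(x + 1) * (poly Q (x + 2) - poly Q x) = 2 ^ Suc e * poly Q x"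
    using shift by (simp add: algebra_simps)
  then have dQ: "2 ^ Suc e dvd poly Q (x + 2) - poly Q x"
    using pow2_dvd_odd_mult_cancel[OF odd] by (metis dvd_triv_left)
  have "(x + 1) * (poly D (x + 2) - poly D x) = 2 ^ Suc e * poly D x - (poly Q (x + 2) - poly Q x)"
    using shift' by (simp add: algebra_simps)
  also have "2 ^ Suc e dvd \<dots>" using dQ by simp
  finally show ?thesis
    unfolding cong_iff_dvd_diff D_def Q_def using pow2_dvd_odd_mult_cancel[OF odd] by blast
qed

lemma pow2_dvd_poly_pderiv_odd_block:
  assumes "e \<ge> 1" "even x"
  shows "2 ^ Suc e dvd poly (pderiv (odd_block (2 ^ e))) x"
proof -
  define D where "D = poly (pderiv (odd_block (2 ^ e)))"
  have shift: "[D (- (2 ^ e) + 2 * t + 2) = D (- (2 ^ e) + 2 * t)] (mod 2 ^ Suc e)" for t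
    unfolding D_def by (rule poly_pderiv_odd_block_shift_cong) (use assms(1) in simp)
  have "[D (- (2 ^ e) + 2 * t) = D (- (2 ^ e))] (mod 2 ^ Suc e)" for t
  proof (induction t rule: int_induct[where k = 0])
    case base
    then show ?case by simp
  next
    case (step1 i)
    have "- (2 ^ e) + 2 * (i + 1) = - (2 ^ e) + 2 * i + 2" by simp
    then show ?case using cong_trans[OF shift[of i] step1(2)] by (simp only:)
  next
    case (step2 i)
    have "- (2 ^ e) + 2 * (i - 1) + 2 = - (2 ^ e) + 2 * i" by simp
    then have "[D (- (2 ^ e) + 2 * (i - 1)) = D (- (2 ^ e) + 2 * i)] (mod 2 ^ Suc e)"
      using shift[of "i - 1"] by (simp add: cong_sym)
    then show ?case using step2(2) by (rule cong_trans)
  qed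
  moreover have "D (- (2 ^ e)) = 0"
    using poly_pderiv_odd_block_midpoint[of "2 ^ e"] assms(1) by (simp add: D_def)
  moreover obtain t where "x = - (2 ^ e) + 2 * t"
  proof -
    obtain j where "x = 2 * j" using assms(2) by blast
    moreover have "(2::int) ^ e = 2 * 2 ^ (e - 1)" using assms(1) by (cases e) auto
    ultimately show ?thesis using that[of "j + 2 ^ (e - 1)"] by simp
  qed
  ultimately show ?thesis by (simp add: D_def cong_0_iff)
qed

lemma poly_odd_block_cong:
  assumes "e \<ge> 1" "even x"
  shows "[poly (odd_block (2 ^ e)) (x + 2 ^ Suc e * c) = poly (odd_block (2 ^ e)) x] (mod 2 ^ (2 * e + 2))"
proof -
  obtain r where r: "poly (odd_block (2 ^ e)) (x + 2 ^ Suc e * c)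
      = poly (odd_block (2 ^ e)) x + 2 ^ Suc e * c * poly (pderiv (odd_block (2 ^ e))) x + (2 ^ Suc e * c)\<^sup>2 * r"
    by (rule poly_taylor_order2)
  obtain d where d: "poly (pderiv (odd_block (2 ^ e))) x = 2 ^ Suc e * d"
    using pow2_dvd_poly_pderiv_odd_block[OF assms] by blast
  have "poly (odd_block (2 ^ e)) (x + 2 ^ Suc e * c) - poly (odd_block (2 ^ e)) x
      = 2 ^ Suc e * 2 ^ Suc e * (c * d + c\<^sup>2 * r)"
    unfolding r d by (simp add: algebra_simps power2_eq_square)
  moreover have "(2::int) ^ (2 * e + 2) = 2 ^ Suc e * 2 ^ Suc e"
    by (simp flip: power_add)
  ultimately show ?thesis by (simp add: cong_iff_dvd_diff)
qed

definition odd_fact :: "nat \<Rightarrow> nat" where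
  "odd_fact k = (\<Prod>i<k. 2 * i + 1)"

lemma odd_fact_Suc: "odd_fact (Suc k) = odd_fact k * (2 * k + 1)"
  by (simp add: odd_fact_def)

lemma odd_odd_fact: "odd (odd_fact k)"
  by (induction k) (simp_all add: odd_fact_Suc odd_fact_def[of 0])

definition odd_falling_prod :: "nat \<Rightarrow> int \<Rightarrow> int" where
  "odd_falling_prod u N = (\<Prod>j<u. 2 * N - 2 * int j - 1)"

lemma odd_falling_prod_ascending: "odd_falling_prod u N = (\<Prod>i<u. 2 * (N - int u) + 2 * int i + 1)"
proof -
  have "odd_falling_prod u N = (\<Prod>i<u. 2 * N - 2 * int (u - Suc i) - 1)"
    unfolding odd_falling_prod_def by (rule prod.nat_diff_reindex[symmetric])
  also have "\<dots> = (\<Prod>i<u. 2 * (N - int u) + 2 * int i + 1)"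
    by (rule prod.cong) (auto simp: of_nat_diff algebra_simps)
  finally show ?thesis .
qed

lemma odd_falling_prod_diag:
  "odd_falling_prod (v + w) (int v) = (- 1) ^ w * int (odd_fact v) * int (odd_fact w)"
proof (induction w)
  case 0
  show ?case by (simp add: odd_falling_prod_ascending odd_fact_def algebra_simps)
next
  case (Suc w)
  have "odd_falling_prod (v + Suc w) (int v) = odd_falling_prod (v + w) (int v) * (- 2 * int w - 1)"
    by (simp add: odd_falling_prod_def algebra_simps)
  then show ?case unfolding Suc odd_fact_Suc by (simp add: algebra_simps)
qed

lemma odd_falling_prod_blocks:
  "odd_falling_prod (2 ^ e * a) N
     = (\<Prod>b<a. poly (odd_block (2 ^ e)) (2 * (N - int (2 ^ e * a)) + 2 ^ Suc e * int b))"
proof -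
  define K :: nat where "K = 2 ^ e"
  define g where "g i = 2 * (N - int (K * a)) + 2 * int i + 1" for i
  have "odd_falling_prod (K * a) N = (\<Prod>i<a * K. g i)"
    by (simp add: odd_falling_prod_ascending g_def mult.commute)
  also have "\<dots> = (\<Prod>b<a. \<Prod>i\<in>{b * K..<b * K + K}. g i)"
    by (rule prod.nat_group[symmetric])
  also have "\<dots> = (\<Prod>b<a. poly (odd_block K) (2 * (N - int (K * a)) + 2 * int K * int b))"
  proof (rule prod.cong[OF refl])
    fix b
    have "(\<Prod>i\<in>{b * K..<b * K + K}. g i) = (\<Prod>i\<in>{0 + b * K..<K + b * K}. g i)"
      by (simp add: add.commute)
    also have "\<dots> = (\<Prod>i<K. g (i + b * K))"
      by (simp only: prod.shift_bounds_nat_ivl atLeast0LessThan)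
    also have "\<dots> = poly (odd_block K) (2 * (N - int (K * a)) + 2 * int K * int b)"
      unfolding poly_odd_block g_def by (rule prod.cong) (auto simp: algebra_simps)
    finally show "(\<Prod>i\<in>{b * K..<b * K + K}. g i)
        = poly (odd_block K) (2 * (N - int (K * a)) + 2 * int K * int b)" .
  qed
  finally show ?thesis by (simp add: K_def)
qed

lemma odd_falling_prod_shift_cong_mod4:
  "[odd_falling_prod u (N + int u) = neg1pow (int u) * odd_falling_prod u N] (mod 4)"
proof -
  have "[2 * (N + int u) - 2 * int j - 1 = neg1pow (int u) * (2 * N - 2 * int j - 1)] (mod 4)" for j
  proof (cases "even u")
    case True
    then obtain k where "u = 2 * k" by blast
    then have "2 * (N + int u) - 2 * int j - 1 - neg1pow (int u) * (2 * N - 2 * int j - 1) = 4 * int k"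
      by (simp add: neg1pow_def algebra_simps)
    then show ?thesis by (simp only: cong_iff_dvd_diff dvd_triv_left)
  next
    case False
    then obtain k where "u = 2 * k + 1" by (blast elim: oddE)
    then have "2 * (N + int u) - 2 * int j - 1 - neg1pow (int u) * (2 * N - 2 * int j - 1)
        = 4 * (N + int k - int j)"
      by (simp add: neg1pow_def algebra_simps)
    then show ?thesis by (simp only: cong_iff_dvd_diff dvd_triv_left)
  qed
  then have "[odd_falling_prod u (N + int u) = (\<Prod>j<u. neg1pow (int u) * (2 * N - 2 * int j - 1))] (mod 4)"
    unfolding odd_falling_prod_def by (rule cong_prod)
  also have "(\<Prod>j<u. neg1pow (int u) * (2 * N - 2 * int j - 1)) = neg1pow (int u) ^ u * odd_falling_prod u N"
    by (simp add: odd_falling_prod_def prod.distrib)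
  also have "neg1pow (int u) ^ u = neg1pow (int u)"
    by (simp add: neg1pow_def)
  finally show ?thesis .
qed

lemma odd_falling_prod_shift_cong:
  assumes "2 ^ e dvd u"
  shows "[odd_falling_prod u (N + int u) = neg1pow (int u) * odd_falling_prod u N] (mod 2 ^ (2 * e + 2))"
proof (cases "e = 0")
  case True
  then show ?thesis using odd_falling_prod_shift_cong_mod4 by simp
next
  case False
  obtain a where u: "u = 2 ^ e * a" using assms by blast
  have "[poly (odd_block (2 ^ e)) (2 * (N + int u - int u) + 2 ^ Suc e * int b)
      = poly (odd_block (2 ^ e)) (2 * (N - int u) + 2 ^ Suc e * int b)] (mod 2 ^ (2 * e + 2))" for b
    using poly_odd_block_cong[of e "2 * (N - int u) + 2 ^ Suc e * int b" "int a"] False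
    by (simp add: u algebra_simps)
  then have "[odd_falling_prod u (N + int u) = odd_falling_prod u N] (mod 2 ^ (2 * e + 2))"
    unfolding u odd_falling_prod_blocks by (intro cong_prod) simp
  moreover have "neg1pow (int u) = 1"
    using False by (simp add: u neg1pow_def)
  ultimately show ?thesis by simp
qed

lemma odd_falling_prod_periodic:
  assumes "2 ^ e dvd u"
  shows "[odd_falling_prod u (N + int u * t) = neg1pow (int u * t) * odd_falling_prod u N] (mod 2 ^ (2 * e + 2))"
proof (induction t rule: int_induct[where k = 0])
  case base
  then show ?case by (simp add: neg1pow_def)
next
  case (step1 i)
  have shift: "[odd_falling_prod u (N + int u * (i + 1))
      = neg1pow (int u) * odd_falling_prod u (N + int u * i)] (mod 2 ^ (2 * e + 2))"
    using odd_falling_prod_shift_cong[OF assms, of "N + int u * i"] by (simp add: algebra_simps)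
  have IH: "[neg1pow (int u) * odd_falling_prod u (N + int u * i)
      = neg1pow (int u) * (neg1pow (int u * i) * odd_falling_prod u N)] (mod 2 ^ (2 * e + 2))"
    using step1(2) by (rule cong_scalar_left)
  have "neg1pow (int u) * (neg1pow (int u * i) * odd_falling_prod u N)
      = neg1pow (int u * (i + 1)) * odd_falling_prod u N"
    using neg1pow_add[of "int u * i" "int u"] by (simp add: distrib_left)
  with cong_trans[OF shift IH] show ?case by simp
next
  case (step2 i)
  define M where "M = N + int u * (i - 1)"
  have "[odd_falling_prod u (N + int u * i) = neg1pow (int u) * odd_falling_prod u M] (mod 2 ^ (2 * e + 2))"
    using odd_falling_prod_shift_cong[OF assms, of M] by (simp add: M_def algebra_simps)
  from cong_scalar_left[OF this, of "neg1pow (int u)"]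
  have shift: "[neg1pow (int u) * odd_falling_prod u (N + int u * i) = odd_falling_prod u M] (mod 2 ^ (2 * e + 2))"
    by (simp add: neg1pow_mult_self flip: mult.assoc)
  have IH: "[neg1pow (int u) * odd_falling_prod u (N + int u * i)
      = neg1pow (int u) * (neg1pow (int u * i) * odd_falling_prod u N)] (mod 2 ^ (2 * e + 2))"
    using step2(2) by (rule cong_scalar_left)
  have "neg1pow (int u) * (neg1pow (int u * i) * odd_falling_prod u N)
      = neg1pow (int u * (i - 1)) * odd_falling_prod u N"
    using neg1pow_add[of "int u * (i - 1)" "int u"] neg1pow_mult_self[of "int u"]
    by (simp add: algebra_simps)
  with cong_trans[OF cong_sym[OF shift] IH] show ?case by (simp add: M_def)
qed

lemma fact_double_odd_fact: "fact (2 * k) = (2 ^ k * fact k * odd_fact k :: nat)"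
proof (induction k)
  case 0
  then show ?case by (simp add: odd_fact_def)
next
  case (Suc k)
  have "fact (2 * Suc k) = (fact (2 * k) * ((2 * k + 1) * (2 * k + 2)) :: nat)"
    by (simp add: algebra_simps)
  then show ?case unfolding Suc odd_fact_Suc by (simp add: algebra_simps)
qed

lemma binomial_double_odd_fact:
  assumes "v \<le> u"
  shows "(2 * u choose 2 * v) * odd_fact v * odd_fact (u - v) = (u choose v) * odd_fact u"
proof -
  define w where "w = u - v"
  have u: "u = v + w" using assms by (simp add: w_def)
  have "fact (2 * v) * fact (2 * w) * (2 * u choose 2 * v) = (fact (2 * u) :: nat)"
    using binomial_fact_lemma[of "2 * v" "2 * u"] by (simp add: u)
  then have "2 ^ u * (fact v * fact w * ((2 * u choose 2 * v) * odd_fact v * odd_fact w))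
      = 2 ^ u * (fact u * odd_fact u)"
    unfolding fact_double_odd_fact by (simp add: u power_add algebra_simps)
  also have "fact u = fact v * fact w * (u choose v)"
    using binomial_fact_lemma[of v u] by (simp add: u)
  finally show ?thesis by (simp add: w_def algebra_simps)
qed

lemma prod_lessThan_even_odd:
  "(\<Prod>i<2 * k + 1. f i) = (\<Prod>j<Suc k. f (2 * j)) * (\<Prod>j<k. f (2 * j + 1 :: nat))"
  by (induction k) (simp_all add: algebra_simps)

lemma gbinomial_double_odd_fact:
  "((2 * of_int N - 1 :: 'a :: field_char_0) gchoose (2 * k + 1)) * of_nat (odd_fact (Suc k))
    = ((of_int N - 1) gchoose k) * of_int (odd_falling_prod (Suc k) N)"
proof -
  define f where "f i = 2 * of_int N - 1 - (of_nat i :: 'a)" for i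
  have "fact (2 * k + 1) * ((2 * of_int N - 1 :: 'a) gchoose (2 * k + 1)) = (\<Prod>i<2 * k + 1. f i)"
    unfolding gbinomial_mult_fact f_def by (simp add: atLeast0LessThan)
  also have "\<dots> = (\<Prod>j<Suc k. f (2 * j)) * (\<Prod>j<k. f (2 * j + 1))"
    by (rule prod_lessThan_even_odd)
  also have "(\<Prod>j<Suc k. f (2 * j)) = of_int (odd_falling_prod (Suc k) N)"
    by (simp add: odd_falling_prod_def f_def algebra_simps)
  also have "(\<Prod>j<k. f (2 * j + 1)) = (\<Prod>j<k. 2 * (of_int N - 1 - of_nat j))"
    by (rule prod.cong) (auto simp: f_def algebra_simps)
  also have "\<dots> = 2 ^ k * (\<Prod>j<k. of_int N - 1 - of_nat j)"
    by (simp only: prod.distrib prod_constant card_lessThan)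
  also have "(\<Prod>j<k. of_int N - 1 - of_nat j) = fact k * ((of_int N - 1 :: 'a) gchoose k)"
    by (simp add: gbinomial_mult_fact atLeast0LessThan)
  finally have expand: "fact (2 * k + 1) * ((2 * of_int N - 1 :: 'a) gchoose (2 * k + 1))
      = of_int (odd_falling_prod (Suc k) N) * (2 ^ k * (fact k * ((of_int N - 1) gchoose k)))" .
  have "(fact (2 * k + 1) :: 'a) = 2 ^ k * fact k * of_nat (odd_fact (Suc k))"
    using arg_cong[OF fact_double_odd_fact[of k], of "of_nat :: nat \<Rightarrow> 'a"]
    by (simp add: odd_fact_Suc algebra_simps)
  then have "(2 ^ k * fact k) * (((2 * of_int N - 1 :: 'a) gchoose (2 * k + 1)) * of_nat (odd_fact (Suc k)))
      = (2 ^ k * fact k) * (((of_int N - 1) gchoose k) * of_int (odd_falling_prod (Suc k) N))"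
    using expand by (simp add: ac_simps)
  then show ?thesis by simp
qed

lemma ibinom_double_odd_fact:
  assumes "u > 0"
  shows "ibinom (2 * N - 1) (2 * u - 1) * int (odd_fact u) = ibinom (N - 1) (u - 1) * odd_falling_prod u N"
proof -
  obtain k where k: "u = Suc k" using assms by (cases u) auto
  have "real_of_int (ibinom (2 * N - 1) (2 * u - 1) * int (odd_fact u))
      = real_of_int (ibinom (N - 1) (u - 1) * odd_falling_prod u N)"
    using gbinomial_double_odd_fact[of N k, where 'a = real] by (simp add: k of_int_ibinom)
  then show ?thesis by (simp only: of_int_eq_iff)
qed

lemma pow2_dvd_binomial_product_odd:
  fixes \<tau> :: int
  assumes "2 ^ \<alpha> dvd m" "\<alpha> \<ge> 1" "m > 0" "odd l"
  shows "(2::int) ^ (2 * \<alpha>) dvd ibinom (int m) l * ibinom (int m * \<tau> + int l - 1) (m - 1)"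
proof -
  obtain k where k: "m = Suc k" using assms(3) by (cases m) auto
  obtain j where j: "l = Suc j" using assms(4) by (cases l) auto
  have "int (2 ^ \<alpha>) dvd int m" using assms(1) by (simp only: of_nat_dvd_iff)
  then have dvd_m: "(2::int) ^ \<alpha> dvd int m" by simp
  have "int l * ibinom (int m) l = int m * ibinom (int m - 1) j"
    using ibinom_absorption[of j "int m"] by (simp add: j)
  then have "(2::int) ^ \<alpha> dvd int l * ibinom (int m) l" using dvd_m by simp
  then have top: "(2::int) ^ \<alpha> dvd ibinom (int m) l"
    by (rule pow2_dvd_odd_mult_cancel[rotated]) (use assms(4) in simp)
  define n where "n = int m * \<tau> + int l"
  have "even m" using assms(1,2) dvd_trans[of 2 "2 ^ \<alpha>" m] by simp
  then have "odd n" using assms(4) by (simp add: n_def)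
  have "int m * ibinom n m = n * ibinom (n - 1) k"
    using ibinom_absorption[of k n] by (simp add: k)
  then have "(2::int) ^ \<alpha> dvd n * ibinom (n - 1) k"
    using dvd_mult2[OF dvd_m] by metis
  then have "(2::int) ^ \<alpha> dvd ibinom (n - 1) k"
    by (rule pow2_dvd_odd_mult_cancel[OF \<open>odd n\<close>])
  moreover have "m - 1 = k" using k by simp
  ultimately have bottom: "(2::int) ^ \<alpha> dvd ibinom (int m * \<tau> + int l - 1) (m - 1)"
    by (simp only: n_def)
  have "(2::int) ^ (2 * \<alpha>) = 2 ^ \<alpha> * 2 ^ \<alpha>" by (simp add: mult_2 power_add)
  then show ?thesis using mult_dvd_mono[OF top bottom] by (simp only:)
qed

lemma binomial_product_double_cong:
  fixes \<tau> :: int and u v :: nat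
  assumes "2 ^ e dvd u" "u > 0"
  defines "N \<equiv> int u * \<tau> + int v"
  shows "[ibinom (2 * int u) (2 * v) * ibinom (2 * N - 1) (2 * u - 1)
      = neg1pow (int u * \<tau> + int u + int v) * ibinom (int u) v * ibinom (N - 1) (u - 1)]
      (mod 2 ^ (2 * e + 2))"
proof (cases "v \<le> u")
  case False
  then show ?thesis
    using ibinom_of_nat[of "2 * u" "2 * v"] by (simp add: binomial_eq_0)
next
  case True
  define w where "w = u - v"
  have "v + w = u" using True by (simp add: w_def)
  define X where "X = ibinom (2 * int u) (2 * v)"
  define Y where "Y = ibinom (2 * N - 1) (2 * u - 1)"
  define A where "A = ibinom (int u) v"
  define B where "B = ibinom (N - 1) (u - 1)"
  define Om where "Om = int (odd_fact v) * int (odd_fact w)"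
  have "X * Om = A * int (odd_fact u)"
    using arg_cong[OF binomial_double_odd_fact[OF True], of int] ibinom_of_nat[of "2 * u" "2 * v"]
    by (simp add: X_def A_def Om_def w_def mult.assoc)
  moreover have "Y * int (odd_fact u) = B * odd_falling_prod u N"
    unfolding Y_def B_def using assms(2) by (rule ibinom_double_odd_fact)
  ultimately have XY: "X * Y * Om = A * B * odd_falling_prod u N"
    by (metis mult.assoc mult.commute)
  have periodic: "[odd_falling_prod u N = neg1pow (int u * \<tau>) * odd_falling_prod u (int v)]
      (mod 2 ^ (2 * e + 2))"
    using odd_falling_prod_periodic[OF assms(1), of "int v" \<tau>] by (simp add: N_def add.commute)
  have diag: "odd_falling_prod u (int v) = neg1pow (int w) * Om"
    using odd_falling_prod_diag[of v w] \<open>v + w = u\<close> by (simp add: Om_def neg1pow_of_nat mult.assoc)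
  have "int u * \<tau> + int u + int v = (int u * \<tau> + int w) + 2 * int v"
    using True by (simp add: w_def of_nat_diff)
  then have sign: "neg1pow (int u * \<tau>) * neg1pow (int w) = neg1pow (int u * \<tau> + int u + int v)"
    by (simp add: neg1pow_add neg1pow_def)
  have "[X * Y * Om = (A * B * neg1pow (int u * \<tau> + int u + int v)) * Om] (mod 2 ^ (2 * e + 2))"
    using cong_scalar_left[OF periodic, of "A * B"] unfolding XY diag sign[symmetric] by (simp add: ac_simps)
  moreover have "odd Om"
    using odd_odd_fact[of v] odd_odd_fact[of w] by (simp add: Om_def)
  then have "coprime Om (2 ^ (2 * e + 2))"
    by (simp only: coprime_commute[of Om] coprime_power_left_iff coprime_left_2_iff_odd simp_thms)
  ultimately have "[X * Y = A * B * neg1pow (int u * \<tau> + int u + int v)] (mod 2 ^ (2 * e + 2))"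
    using cong_mult_rcancel by blast
  then show ?thesis by (simp add: X_def Y_def A_def B_def ac_simps)
qed

theorem lemma4p8:
  fixes \<tau> :: int and m l a b \<alpha> \<beta> :: nat
  assumes "odd a" "odd b" "a > 0" "b > 0" "\<alpha> \<ge> 1"
    and "m = 2 ^ \<alpha> * a" and "l = 2 ^ \<beta> * b"
  shows "(2::int) ^ (2 * \<alpha>) dvd
    (neg1pow (int m * \<tau> + int m + int l) * ibinom (int m) l
       * ibinom (int m * \<tau> + int l - 1) (m - 1)
     - (if \<beta> = 0 then 0 else
         neg1pow ((int m * \<tau> + int m + int l) div 2) * ibinom (int (m div 2)) (l div 2)
         * ibinom ((int m * \<tau> + int l) div 2 - 1) (m div 2 - 1)))"
proof (cases "\<beta> = 0")
  case True
  then have "odd l" using assms by simp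
  with assms have "(2::int) ^ (2 * \<alpha>) dvd ibinom (int m) l * ibinom (int m * \<tau> + int l - 1) (m - 1)"
    by (intro pow2_dvd_binomial_product_odd) simp_all
  with True show ?thesis by (simp add: mult.assoc)
next
  case False
  define u where "u = 2 ^ (\<alpha> - 1) * a"
  define v where "v = 2 ^ (\<beta> - 1) * b"
  have m: "m = 2 * u" and l: "l = 2 * v"
    using assms(5-7) False by (simp_all add: u_def v_def power_eq_if)
  have "2 * (\<alpha> - 1) + 2 = 2 * \<alpha>" using assms(5) by simp
  then have "[ibinom (2 * int u) (2 * v) * ibinom (2 * (int u * \<tau> + int v) - 1) (2 * u - 1)
      = neg1pow (int u * \<tau> + int u + int v) * ibinom (int u) v * ibinom (int u * \<tau> + int v - 1) (u - 1)]
      (mod 2 ^ (2 * \<alpha>))"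
    using binomial_product_double_cong[where e = "\<alpha> - 1" and u = u and v = v and \<tau> = \<tau>] assms(3) by (simp add: u_def)
  moreover have "neg1pow (int m * \<tau> + int m + int l) = 1"
    by (simp add: m l neg1pow_def)
  ultimately show ?thesis
    using False by (simp add: m l cong_iff_dvd_diff mult.assoc)
qed

end
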